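(* Let $m,N\in\mathbb N$, let $\mathcal B=(\mathcal B_1,\dots,\mathcal B_B)$ be a partition of $\{1,\dots,N\}$ with weights $\omega=(\omega_b)$, $\omega_b\ge1$. Assume $A\in\mathbb R^{m\times N}$ satisfies the $\ell^2_\omega$-BRNSP of order $s\ge\|\omega\|_\infty^2$ with constants $0<\rho<1$, $\tau>0$. Let $x\in\mathbb R^N$ and $y=Ax+e$ with $\|e\|_2\le\eta$. Let $\hat x$ be a solution of $$\min_{z\in\mathbb R^N}\|z\|_{2,1}^{(\omega)}=\sum_{j=1}^B\omega_j\|z[\mathcal B_j]\|_2\quad\text{s.t. }\|Az-y\|_2\le\eta.$$ Then $$\|x-\hat x\|_{2,1}^{(\omega)}\le 2C_\rho\,\sigma_s(x)_{2,1}^{(\omega)}+2D_{\rho,\tau}\sqrt s\,\eta,\qquad \|x-\hat x\|_2\le 2C_\rho\frac{\sigma_s(x)_{2,1}^{(\omega)}}{\sqrt s}+2D_{\rho,\tau}\eta,$$ where $C_\rho=\frac{(1+\rho)^2}{1-\rho}$ and $D_{\rho,\tau}=\frac{3+\rho}{1-\rho}\tau$.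
   Context: Block structure: $\mathcal B=(\mathcal B_1,\dots,\mathcal B_B)$ partition of $\{1,\dots,N\}$; $x[b]=x[\mathcal B_b]$; for $S\subseteq\{1,\dots,B\}$, $x[S]$ equals $x$ on blocks in $S$ and $0$ elsewhere, $S^c$ its complement in $\{1,\dots,B\}$. Weights $\omega_b\ge1$, $\|\omega\|_\infty=\max_b\omega_b$, $\omega(S)=\sum_{b\in S}\omega_b^2$. $\|x\|_{2,p}^{(\omega)}=\big(\sum_b\omega_b^{2-p}\|x[b]\|_2^p\big)^{1/p}$ (note $\|x\|_{2,2}^{(\omega)}=\|x\|_2$). $\|x\|_0^{(\omega)}=\omega(\{b:x[b]\ne0\})$. $\sigma_s(x)_{2,p}^{(\omega)}=\inf\{\|x-z\|_{2,p}^{(\omega)}:\|z\|_0^{(\omega)}\le s\}$. Definition ($\ell^p_\omega$-BRNSP): $A$ satisfies the weighted block $\ell^p$ robust null space property of order $s\ge\|\omega\|_\infty$ with constants $\rho\in(0,1)$, $\tau>0$ if $\|x[S]\|_{2,p}^{(\omega)}\le\frac{\rho}{s^{1-1/p}}\|x[S^c]\|_{2,1}^{(\omega)}+\tau\|Ax\|_2$ for all $x\in\mathbb R^N$ and all $S$ with $\omega(S)\le s$. *)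

theory Defs
  imports "HOL-Analysis.Analysis"
begin

text \<open>Block structure: a surjective map blk from the coordinate type 'n onto the
 finite block index type 'b; block b is the (nonempty) set of coordinates i with blk i = b.\<close>

definition block_partition :: "('n::finite \<Rightarrow> 'b::finite) \<Rightarrow> bool" where
  "block_partition blk \<longleftrightarrow> surj blk"

definition restrS :: "('n::finite \<Rightarrow> 'b) \<Rightarrow> real^'n \<Rightarrow> 'b set \<Rightarrow> real^'n" where
  "restrS blk x S = (\<chi> i. if blk i \<in> S then x $ i else 0)"

definition blk_vec :: "('n::finite \<Rightarrow> 'b) \<Rightarrow> real^'n \<Rightarrow> 'b \<Rightarrow> real^'n" where
  "blk_vec blk x b = restrS blk x {b}"

definition wnorm :: "('n::finite \<Rightarrow> 'b::finite) \<Rightarrow> ('b \<Rightarrow> real) \<Rightarrow> real \<Rightarrow> real^'n \<Rightarrow> real" where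
  "wnorm blk w p x = (\<Sum>b\<in>UNIV. w b powr (2 - p) * norm (blk_vec blk x b) powr p) powr (1 / p)"

definition wmeas :: "('b \<Rightarrow> real) \<Rightarrow> 'b set \<Rightarrow> real" where
  "wmeas w S = (\<Sum>b\<in>S. (w b)\<^sup>2)"

definition wnorm0 :: "('n::finite \<Rightarrow> 'b::finite) \<Rightarrow> ('b \<Rightarrow> real) \<Rightarrow> real^'n \<Rightarrow> real" where
  "wnorm0 blk w x = wmeas w {b. blk_vec blk x b \<noteq> 0}"

definition winf :: "('b::finite \<Rightarrow> real) \<Rightarrow> real" where
  "winf w = Max (range w)"

definition best_approx :: "('n::finite \<Rightarrow> 'b::finite) \<Rightarrow> ('b \<Rightarrow> real) \<Rightarrow> real \<Rightarrow> real \<Rightarrow> real^'n \<Rightarrow> real" where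
  "best_approx blk w s p x = (INF z\<in>{z. wnorm0 blk w z \<le> s}. wnorm blk w p (x - z))"

definition BRNSP :: "('n::finite \<Rightarrow> 'b::finite) \<Rightarrow> ('b \<Rightarrow> real) \<Rightarrow> real \<Rightarrow> real^'n^'m \<Rightarrow> real \<Rightarrow> real \<Rightarrow> real \<Rightarrow> bool" where
  "BRNSP blk w p A s \<rho> \<tau> \<longleftrightarrow> s \<ge> winf w \<and> 0 < \<rho> \<and> \<rho> < 1 \<and> \<tau> > 0 \<and>
     (\<forall>x S. wmeas w S \<le> s \<longrightarrow>
        wnorm blk w p (restrS blk x S) \<le> \<rho> / s powr (1 - 1/p) * wnorm blk w 1 (restrS blk x (- S)) + \<tau> * norm (A *v x))"

end

theory Submission
  imports Defs
begin

text \<open>By Cauchy-Schwarz with the weights, the \<open>\<ell>\<^sup>2\<close>-BRNSP of order s yields an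
  \<open>\<ell>\<^sup>1\<close>-type null space property on every block set S with \<open>\<omega>(S) \<le> s\<close>, with the noise
  term scaled by sqrt s. Minimality of xh and the usual cone argument then bound the
  \<open>\<ell>\<^sub>2\<^sub>,\<^sub>1\<close> error by the tail of x outside any such S, hence by \<open>\<sigma>\<^sub>s(x)\<close>.
  For the \<open>\<ell>\<^sup>2\<close> error v = x - xh one picks S greedily among the blocks with the largest
  ratios \<open>\<parallel>v[b]\<parallel>/\<omega>\<^sub>b\<close> (a weighted Stechkin estimate), so that
  \<open>sqrt s \<parallel>v[S\<^sup>c]\<parallel> \<le> \<parallel>v\<parallel>\<^sub>2\<^sub>,\<^sub>1\<close>, and applies the BRNSP on S.\<close>

text \<open>\<open>\<parallel>x[S]\<parallel>\<^sub>2\<^sub>,\<^sub>1\<close> as a plain sum, free of the powr junk values in wnorm.\<close>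

definition wmass :: "('n::finite \<Rightarrow> 'b::finite) \<Rightarrow> ('b \<Rightarrow> real) \<Rightarrow> 'b set \<Rightarrow> real^'n \<Rightarrow> real" where
  "wmass blk w S x = (\<Sum>b\<in>S. w b * norm (blk_vec blk x b))"

lemma blk_vec_restrS: "blk_vec blk (restrS blk x S) b = (if b \<in> S then blk_vec blk x b else 0)"
  by (auto simp: blk_vec_def restrS_def vec_eq_iff)

lemma blk_vec_diff: "blk_vec blk (x - y) b = blk_vec blk x b - blk_vec blk y b"
  by (auto simp: blk_vec_def restrS_def vec_eq_iff)

lemma blk_vec_zero [simp]: "blk_vec blk 0 b = 0"
  by (simp add: blk_vec_def restrS_def vec_eq_iff)

lemma restrS_UNIV [simp]: "restrS blk x UNIV = x"
  by (simp add: restrS_def vec_eq_iff)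

lemma restrS_add_compl: "restrS blk x S + restrS blk x (- S) = x"
  by (auto simp: restrS_def vec_eq_iff)

lemma norm_vec_power2: "(norm (x::real^'n))\<^sup>2 = (\<Sum>i\<in>UNIV. (x $ i)\<^sup>2)"
  by (simp add: norm_vec_def L2_set_def sum_nonneg)

lemma sum_blocks_norm_squared:
  fixes blk :: "'n::finite \<Rightarrow> 'b::finite"
  shows "(\<Sum>b\<in>S. (norm (blk_vec blk x b))\<^sup>2) = (norm (restrS blk x S))\<^sup>2"
proof -
  have "(norm (blk_vec blk x b))\<^sup>2 = (\<Sum>i\<in>UNIV. if blk i = b then (x $ i)\<^sup>2 else 0)" for b
    unfolding norm_vec_power2 by (rule sum.cong) (auto simp: blk_vec_def restrS_def)
  then have "(\<Sum>b\<in>S. (norm (blk_vec blk x b))\<^sup>2) = (\<Sum>b\<in>S. \<Sum>i\<in>UNIV. if blk i = b then (x $ i)\<^sup>2 else 0)"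
    by simp
  also have "\<dots> = (\<Sum>i\<in>UNIV. \<Sum>b\<in>S. if blk i = b then (x $ i)\<^sup>2 else 0)"
    by (rule sum.swap)
  also have "\<dots> = (norm (restrS blk x S))\<^sup>2"
    unfolding norm_vec_power2 by (rule sum.cong) (auto simp: restrS_def)
  finally show ?thesis .
qed

lemma norm_restrS:
  fixes blk :: "'n::finite \<Rightarrow> 'b::finite"
  shows "norm (restrS blk x S) = L2_set (\<lambda>b. norm (blk_vec blk x b)) S"
  by (simp add: L2_set_def sum_blocks_norm_squared)

lemma wmass_split: "wmass blk w UNIV x = wmass blk w S x + wmass blk w (- S) x"
  unfolding wmass_def by (metis Compl_eq_Diff_UNIV add.commute finite sum.subset_diff top_greatest)

lemma wmass_nonneg: "(\<And>b. 0 \<le> w b) \<Longrightarrow> 0 \<le> wmass blk w S x"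
  unfolding wmass_def by (simp add: sum_nonneg)

lemma wmass_mono: "(\<And>b. 0 \<le> w b) \<Longrightarrow> wmass blk w S x \<le> wmass blk w UNIV x"
  unfolding wmass_def by (intro sum_mono2) auto

lemma wnorm_1_eq_wmass:
  assumes "\<And>b. 0 \<le> w b"
  shows "wnorm blk w 1 (restrS blk x S) = wmass blk w S x"
proof -
  have "wnorm blk w 1 (restrS blk x S) = wmass blk w UNIV (restrS blk x S)"
    using assms wmass_nonneg[of w blk UNIV "restrS blk x S", OF assms]
    by (simp add: wnorm_def wmass_def)
  also have "\<dots> = wmass blk w S x"
    unfolding wmass_def blk_vec_restrS by (simp add: if_distrib sum.If_cases)
  finally show ?thesis .
qed

lemma wnorm_1_eq_wmass_UNIV: "(\<And>b. 0 \<le> w b) \<Longrightarrow> wnorm blk w 1 x = wmass blk w UNIV x"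
  using wnorm_1_eq_wmass[of w blk x UNIV] by simp

lemma wnorm_2_eq_norm:
  assumes "\<And>b. 0 < w b"
  shows "wnorm blk w 2 x = norm x"
proof -
  have "wnorm blk w 2 x = sqrt (\<Sum>b\<in>UNIV. (norm (blk_vec blk x b))\<^sup>2)"
    using assms by (simp add: wnorm_def powr_half_sqrt sum_nonneg less_imp_le less_imp_neq[symmetric])
  then show ?thesis by (simp add: sum_blocks_norm_squared)
qed

text \<open>Take for S a largest set of blocks of weight at most s that contains the blocks with
  the largest ratios u/w. If a block j remains outside, adding it would exceed s, so
  s * u j / w j is at most the total weighted sum, while every tail term satisfies
  (u b)^2 \<le> (u j / w j) * w b * u b.\<close>
lemma weighted_stechkin:
  fixes u w :: "'b::finite \<Rightarrow> real"
  assumes w_pos: "\<And>b. 0 < w b" and u_nonneg: "\<And>b. 0 \<le> u b" and "0 \<le> s"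
  shows "\<exists>S. wmeas w S \<le> s \<and> s * (\<Sum>b\<in>-S. (u b)\<^sup>2) \<le> (\<Sum>b\<in>UNIV. w b * u b)\<^sup>2"
proof -
  define r where "r b = u b / w b" for b
  define T where "T = (\<Sum>b\<in>UNIV. w b * u b)"
  define G where "G = {S. wmeas w S \<le> s \<and> (\<forall>b\<in>S. \<forall>c\<in>-S. r c \<le> r b)}"
  have "{} \<in> G"
    using \<open>0 \<le> s\<close> by (simp add: G_def wmeas_def)
  then obtain S where S_G: "S \<in> G" and S_max: "\<And>S'. S' \<in> G \<Longrightarrow> card S' \<le> card S"
    using ex_has_greatest_nat[of "\<lambda>S. S \<in> G" "{}" card "Suc (card (UNIV :: 'b set))"]
    by (metis card_mono finite subset_UNIV le_imp_less_Suc)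
  have wu_nonneg: "0 \<le> w b * u b" for b
    using w_pos u_nonneg by (simp add: less_imp_le)
  have r_nonneg: "0 \<le> r b" for b
    using w_pos u_nonneg by (simp add: r_def less_imp_le)
  show ?thesis
  proof (cases "S = UNIV")
    case True
    then show ?thesis using S_G by (intro exI[of _ S]) (simp add: G_def)
  next
    case False
    obtain j where j: "j \<in> -S" and r_j: "\<And>c. c \<in> -S \<Longrightarrow> r c \<le> r j"
      using False Max_in[of "r ` (-S)"] Max_ge[of "r ` (-S)"] by fastforce
    have r_S: "r j \<le> r b" if "b \<in> S" for b
      using S_G j that by (auto simp: G_def)
    have "insert j S \<notin> G"
      using S_max[of "insert j S"] j by auto
    moreover have "\<forall>b\<in>insert j S. \<forall>c\<in>-insert j S. r c \<le> r b"
      using S_G r_j by (auto simp: G_def)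
    ultimately have exceeds: "s < wmeas w (insert j S)"
      by (auto simp: G_def)
    have "(\<Sum>b\<in>-S. (u b)\<^sup>2) = (\<Sum>b\<in>-S. w b * u b * r b)"
      using w_pos by (intro sum.cong) (auto simp: r_def power2_eq_square less_imp_neq[symmetric])
    also have "\<dots> \<le> (\<Sum>b\<in>-S. w b * u b * r j)"
      by (intro sum_mono mult_left_mono r_j wu_nonneg)
    also have "\<dots> = r j * (\<Sum>b\<in>-S. w b * u b)"
      by (simp add: sum_distrib_left mult.commute)
    also have "\<dots> \<le> r j * T"
      unfolding T_def by (intro mult_left_mono sum_mono2 r_nonneg wu_nonneg) auto
    finally have tail: "(\<Sum>b\<in>-S. (u b)\<^sup>2) \<le> r j * T" .
    have "s * r j \<le> wmeas w (insert j S) * r j"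
      using exceeds r_nonneg by (intro mult_right_mono) auto
    also have "\<dots> \<le> (\<Sum>b\<in>insert j S. (w b)\<^sup>2 * r b)"
      unfolding wmeas_def sum_distrib_right using r_S j
      by (intro sum_mono mult_left_mono) auto
    also have "\<dots> = (\<Sum>b\<in>insert j S. w b * u b)"
      using w_pos by (intro sum.cong) (auto simp: r_def power2_eq_square less_imp_neq[symmetric])
    also have "\<dots> \<le> T"
      unfolding T_def by (intro sum_mono2 wu_nonneg) auto
    finally have head: "s * r j \<le> T" .
    have "s * (\<Sum>b\<in>-S. (u b)\<^sup>2) \<le> s * (r j * T)"
      using tail \<open>0 \<le> s\<close> by (rule mult_left_mono)
    also have "\<dots> \<le> T * T"
      using head sum_nonneg[of UNIV "\<lambda>b. w b * u b", OF wu_nonneg]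
      by (simp add: T_def mult.assoc[symmetric] mult_right_mono)
    finally show ?thesis
      using S_G by (auto simp: G_def T_def power2_eq_square)
  qed
qed

lemma winf_ge: "w b \<le> winf (w :: 'b::finite \<Rightarrow> real)"
  unfolding winf_def by (intro Max_ge) auto

lemma BRNSP_order_ge_1: "BRNSP blk w p A s \<rho> \<tau> \<Longrightarrow> (\<And>b. 1 \<le> w b) \<Longrightarrow> 1 \<le> s"
  unfolding BRNSP_def by (meson order_trans winf_ge)

lemma BRNSP_2_restrS:
  assumes "BRNSP blk w 2 A s \<rho> \<tau>" and w_ge_1: "\<And>b. 1 \<le> w b" and "wmeas w S \<le> s"
  shows "norm (restrS blk v S) \<le> \<rho> / sqrt s * wmass blk w (-S) v + \<tau> * norm (A *v v)"
proof -
  have "1 \<le> s"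
    using assms(1) w_ge_1 by (rule BRNSP_order_ge_1)
  then have "s powr (1 - 1/2) = sqrt s"
    by (simp add: powr_half_sqrt)
  moreover have "\<And>b. 0 < w b" "\<And>b. 0 \<le> w b"
    using w_ge_1 by (auto intro: less_le_trans[of 0 1] order_trans[of 0 1])
  ultimately show ?thesis
    using assms(1,3) by (simp add: BRNSP_def wnorm_2_eq_norm wnorm_1_eq_wmass)
qed

text \<open>Cauchy-Schwarz with the weights: the \<open>\<ell>\<^sub>2\<close>-mass on S costs a factor sqrt (wmeas w S).\<close>
lemma BRNSP_2_wmass:
  assumes N: "BRNSP blk w 2 A s \<rho> \<tau>" and w_ge_1: "\<And>b. 1 \<le> w b" and S: "wmeas w S \<le> s"
  shows "wmass blk w S v \<le> \<rho> * wmass blk w (-S) v + sqrt s * \<tau> * norm (A *v v)"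
proof -
  have "1 \<le> s"
    using N w_ge_1 by (rule BRNSP_order_ge_1)
  have "0 \<le> w b" for b
    using w_ge_1 order_trans zero_le_one by blast
  then have "wmass blk w S v = (\<Sum>b\<in>S. \<bar>w b\<bar> * \<bar>norm (blk_vec blk v b)\<bar>)"
    by (simp add: wmass_def)
  also have "\<dots> \<le> L2_set w S * L2_set (\<lambda>b. norm (blk_vec blk v b)) S"
    by (rule L2_set_mult_ineq)
  also have "\<dots> = sqrt (wmeas w S) * norm (restrS blk v S)"
    by (simp add: L2_set_def wmeas_def norm_restrS)
  also have "\<dots> \<le> sqrt s * norm (restrS blk v S)"
    using S by (intro mult_right_mono) auto
  also have "\<dots> \<le> sqrt s * (\<rho> / sqrt s * wmass blk w (-S) v + \<tau> * norm (A *v v))"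
    using BRNSP_2_restrS[OF N w_ge_1 S] \<open>1 \<le> s\<close> by (intro mult_left_mono) auto
  also have "\<dots> = \<rho> * wmass blk w (-S) v + sqrt s * \<tau> * norm (A *v v)"
    using \<open>1 \<le> s\<close> by (simp add: field_simps)
  finally show ?thesis .
qed

text \<open>The usual cone argument: minimality of xh forces the error x - xh to concentrate on S
  up to the tail of x outside S.\<close>
lemma wmass_error_le_tail:
  assumes w_nonneg: "\<And>b. 0 \<le> w b" and "0 \<le> \<rho>" "\<rho> \<le> 1"
    and nsp: "wmass blk w S (x - xh) \<le> \<rho> * wmass blk w (-S) (x - xh) + c"
    and minimal: "wmass blk w UNIV xh \<le> wmass blk w UNIV x"
  shows "(1 - \<rho>) * wmass blk w UNIV (x - xh) \<le> 2 * c + 2 * (1 + \<rho>) * wmass blk w (-S) x"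
proof -
  define a where "a = wmass blk w S (x - xh)"
  define a' where "a' = wmass blk w (-S) (x - xh)"
  define t where "t = wmass blk w (-S) x"
  have "norm (blk_vec blk x b) - norm (blk_vec blk (x - xh) b) \<le> norm (blk_vec blk xh b)"
    and "norm (blk_vec blk (x - xh) b) - norm (blk_vec blk x b) \<le> norm (blk_vec blk xh b)" for b
    using norm_triangle_ineq2[of "blk_vec blk x b" "blk_vec blk x b - blk_vec blk xh b"]
      norm_triangle_ineq2[of "blk_vec blk x b - blk_vec blk xh b" "blk_vec blk x b"]
    by (simp_all add: blk_vec_diff norm_minus_commute)
  then have "wmass blk w S x - a + (a' - t) \<le> wmass blk w S xh + wmass blk w (-S) xh"
    unfolding a_def a'_def t_def wmass_def sum_subtractf[symmetric] right_diff_distrib[symmetric]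
    by (intro add_mono sum_mono mult_left_mono w_nonneg)
  also have "\<dots> \<le> wmass blk w S x + t"
    using minimal wmass_split[of blk w xh S] wmass_split[of blk w x S] by (simp add: t_def)
  finally have cone: "a' \<le> a + 2 * t"
    by simp
  have "(1 - \<rho>) * (a + a') \<le> (1 - \<rho>) * ((1 + \<rho>) * a' + c)"
    using nsp \<open>\<rho> \<le> 1\<close> by (intro mult_left_mono) (auto simp: a_def a'_def algebra_simps)
  also have "\<dots> \<le> (1 + \<rho>) * (c + 2 * t) + (1 - \<rho>) * c"
    using nsp cone \<open>0 \<le> \<rho>\<close> mult_left_mono[of "(1 - \<rho>) * a'" "c + 2 * t" "1 + \<rho>"]
    by (simp add: a_def a'_def algebra_simps)
  finally show ?thesis
    using wmass_split[of blk w "x - xh" S] by (simp add: a_def a'_def t_def algebra_simps)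
qed

lemma le_best_approx_1:
  assumes w_nonneg: "\<And>b. 0 \<le> w b" and "0 \<le> s"
    and tail: "\<And>S. wmeas w S \<le> s \<Longrightarrow> t \<le> wmass blk w (-S) x"
  shows "t \<le> best_approx blk w s 1 x"
  unfolding best_approx_def
proof (rule cINF_greatest)
  show "{z. wnorm0 blk w z \<le> s} \<noteq> {}"
    using \<open>0 \<le> s\<close> by (auto simp: wnorm0_def wmeas_def intro: exI[of _ 0])
next
  fix z assume "z \<in> {z. wnorm0 blk w z \<le> s}"
  then have supp: "wmeas w {b. blk_vec blk z b \<noteq> 0} \<le> s"
    by (simp add: wnorm0_def)
  have "wmass blk w (- {b. blk_vec blk z b \<noteq> 0}) x = wmass blk w (- {b. blk_vec blk z b \<noteq> 0}) (x - z)"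
    unfolding wmass_def by (intro sum.cong) (auto simp: blk_vec_diff)
  also have "\<dots> \<le> wnorm blk w 1 (x - z)"
    by (simp add: w_nonneg wmass_mono wnorm_1_eq_wmass_UNIV)
  finally show "t \<le> wnorm blk w 1 (x - z)"
    using tail[OF supp] by linarith
qed

lemma BRNSP_2_norm_le:
  assumes N: "BRNSP blk w 2 A s \<rho> \<tau>" and w_ge_1: "\<And>b. 1 \<le> w b"
  shows "sqrt s * norm v \<le> (1 + \<rho>) * wnorm blk w 1 v + sqrt s * \<tau> * norm (A *v v)"
proof -
  have "1 \<le> s"
    using N w_ge_1 by (rule BRNSP_order_ge_1)
  have w_pos: "0 < w b" for b
    using w_ge_1 less_le_trans zero_less_one by blast
  then have w_nonneg: "0 \<le> w b" for b
    by (simp add: less_imp_le)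
  obtain S where S: "wmeas w S \<le> s"
    and tail: "s * (\<Sum>b\<in>-S. (norm (blk_vec blk v b))\<^sup>2) \<le> (wmass blk w UNIV v)\<^sup>2"
    using weighted_stechkin[of w "\<lambda>b. norm (blk_vec blk v b)" s] w_pos \<open>1 \<le> s\<close>
    unfolding wmass_def by auto
  have "(sqrt s * norm (restrS blk v (-S)))\<^sup>2 \<le> (wmass blk w UNIV v)\<^sup>2"
    using tail \<open>1 \<le> s\<close> by (simp add: power_mult_distrib sum_blocks_norm_squared)
  then have off_S: "sqrt s * norm (restrS blk v (-S)) \<le> wmass blk w UNIV v"
    using wmass_nonneg[where w = w, OF w_nonneg] by (rule power2_le_imp_le)
  have "norm (restrS blk v S) \<le> \<rho> / sqrt s * wmass blk w (-S) v + \<tau> * norm (A *v v)"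
    using N w_ge_1 S by (rule BRNSP_2_restrS)
  also have "\<dots> \<le> \<rho> / sqrt s * wmass blk w UNIV v + \<tau> * norm (A *v v)"
    using N \<open>1 \<le> s\<close> by (intro add_right_mono mult_left_mono wmass_mono w_nonneg) (simp add: BRNSP_def)
  finally have on_S: "sqrt s * norm (restrS blk v S) \<le> \<rho> * wmass blk w UNIV v + sqrt s * \<tau> * norm (A *v v)"
    using \<open>1 \<le> s\<close> mult_left_mono[of _ _ "sqrt s"] by (fastforce simp: field_simps)
  have "norm v \<le> norm (restrS blk v S) + norm (restrS blk v (-S))"
    by (metis norm_triangle_ineq restrS_add_compl)
  then have "sqrt s * norm v \<le> sqrt s * norm (restrS blk v S) + sqrt s * norm (restrS blk v (-S))"
    using \<open>1 \<le> s\<close> by (simp add: distrib_left[symmetric] mult_left_mono)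
  then show ?thesis
    using on_S off_S by (simp add: algebra_simps wnorm_1_eq_wmass_UNIV w_nonneg)
qed

lemma best_approx_1_nonneg: "(\<And>b. 0 \<le> w b) \<Longrightarrow> 0 \<le> s \<Longrightarrow> 0 \<le> best_approx blk w s 1 x"
  by (intro le_best_approx_1 wmass_nonneg)

lemma BRNSP_2_wnorm_1_error_le:
  assumes N: "BRNSP blk w 2 A s \<rho> \<tau>" and w_ge_1: "\<And>b. 1 \<le> w b"
    and minimal: "wnorm blk w 1 xh \<le> wnorm blk w 1 x"
  shows "(1 - \<rho>) * wnorm blk w 1 (x - xh)
    \<le> 2 * sqrt s * \<tau> * norm (A *v (x - xh)) + 2 * (1 + \<rho>) * best_approx blk w s 1 x"
proof -
  have w_nonneg: "0 \<le> w b" for b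
    using w_ge_1 order_trans zero_le_one by blast
  have "1 \<le> s"
    using N w_ge_1 by (rule BRNSP_order_ge_1)
  have "0 < \<rho>" "\<rho> < 1"
    using N by (simp_all add: BRNSP_def)
  define c where "c = sqrt s * \<tau> * norm (A *v (x - xh))"
  have "((1 - \<rho>) * wmass blk w UNIV (x - xh) - 2 * c) / (2 * (1 + \<rho>)) \<le> best_approx blk w s 1 x"
  proof (rule le_best_approx_1[OF w_nonneg])
    fix S assume "wmeas w S \<le> s"
    with N w_ge_1 have "wmass blk w S (x - xh) \<le> \<rho> * wmass blk w (-S) (x - xh) + c"
      unfolding c_def by (rule BRNSP_2_wmass)
    from wmass_error_le_tail[OF w_nonneg _ _ this] minimal
    show "((1 - \<rho>) * wmass blk w UNIV (x - xh) - 2 * c) / (2 * (1 + \<rho>)) \<le> wmass blk w (-S) x"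
      using \<open>0 < \<rho>\<close> \<open>\<rho> < 1\<close> by (simp add: wnorm_1_eq_wmass_UNIV w_nonneg pos_divide_le_eq algebra_simps)
  qed (use \<open>1 \<le> s\<close> in simp)
  then show ?thesis
    using \<open>0 < \<rho>\<close> by (simp add: c_def wnorm_1_eq_wmass_UNIV w_nonneg pos_divide_le_eq algebra_simps)
qed

lemma recovery_bounds_arith:
  fixes \<rho> \<tau> \<eta> q r L N \<sigma> :: real
  assumes "0 \<le> \<rho>" "\<rho> < 1" "0 < q" "0 \<le> \<tau>" "0 \<le> \<sigma>" "0 \<le> r" "r \<le> 2 * \<eta>"
    and l1: "(1 - \<rho>) * L \<le> 2 * q * \<tau> * r + 2 * (1 + \<rho>) * \<sigma>"
    and l2: "q * N \<le> (1 + \<rho>) * L + q * \<tau> * r"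
  shows "L \<le> 2 * ((1 + \<rho>)\<^sup>2 / (1 - \<rho>)) * \<sigma> + 2 * ((3 + \<rho>) / (1 - \<rho>) * \<tau>) * q * \<eta>"
    and "N \<le> 2 * ((1 + \<rho>)\<^sup>2 / (1 - \<rho>)) * \<sigma> / q + 2 * ((3 + \<rho>) / (1 - \<rho>) * \<tau>) * \<eta>"
proof -
  have q\<tau>: "0 \<le> q * \<tau>"
    using assms(3,4) by simp
  then have noise: "q * \<tau> * r \<le> 2 * (q * \<tau> * \<eta>)" "0 \<le> q * \<tau> * \<eta>"
    using assms(6,7) mult_left_mono[of r "2 * \<eta>" "q * \<tau>"] by auto
  have "2 * (1 + \<rho>) * \<sigma> \<le> 2 * (1 + \<rho>)\<^sup>2 * \<sigma>"
    using assms(1,5) by (intro mult_right_mono) (auto simp: power2_eq_square algebra_simps)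
  moreover have "4 * (q * \<tau> * \<eta>) \<le> 2 * (3 + \<rho>) * (q * \<tau> * \<eta>)"
    using assms(1) noise(2) by (intro mult_right_mono) auto
  ultimately have L: "(1 - \<rho>) * L \<le> 2 * (1 + \<rho>)\<^sup>2 * \<sigma> + 2 * (3 + \<rho>) * (q * \<tau> * \<eta>)"
    using l1 noise(1) by (simp add: mult.assoc)
  have "(1 - \<rho>) * (q * N) \<le> (1 - \<rho>) * ((1 + \<rho>) * L + 2 * (q * \<tau> * \<eta>))"
    using l2 noise(1) assms(2) by (intro mult_left_mono) auto
  also have "\<dots> = (1 + \<rho>) * ((1 - \<rho>) * L) + (1 - \<rho>) * (2 * (q * \<tau> * \<eta>))"
    by (simp add: algebra_simps)
  also have "\<dots> \<le> (1 + \<rho>) * (4 * (q * \<tau> * \<eta>) + 2 * (1 + \<rho>) * \<sigma>) + (1 - \<rho>) * (2 * (q * \<tau> * \<eta>))"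
    using l1 noise(1) assms(1) by (intro add_right_mono mult_left_mono) (auto simp: mult.assoc)
  finally have N: "(1 - \<rho>) * (q * N) \<le> 2 * (1 + \<rho>)\<^sup>2 * \<sigma> + 2 * (3 + \<rho>) * (q * \<tau> * \<eta>)"
    by (simp add: power2_eq_square algebra_simps)
  obtain d where d: "1 - \<rho> = d" "0 < d"
    using assms(2) by simp
  show "L \<le> 2 * ((1 + \<rho>)\<^sup>2 / (1 - \<rho>)) * \<sigma> + 2 * ((3 + \<rho>) / (1 - \<rho>) * \<tau>) * q * \<eta>"
    using L d(2) unfolding d(1) by (simp add: field_simps)
  show "N \<le> 2 * ((1 + \<rho>)\<^sup>2 / (1 - \<rho>)) * \<sigma> / q + 2 * ((3 + \<rho>) / (1 - \<rho>) * \<tau>) * \<eta>"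
    using N d(2) assms(3) unfolding d(1) by (simp add: field_simps)
qed

theorem mainTheorem5:
  fixes blk :: "'n::finite \<Rightarrow> 'b::finite" and w :: "'b \<Rightarrow> real"
    and A :: "real^'n^'m::finite" and s \<rho> \<tau> \<eta> :: real
    and x xh :: "real^'n" and e y :: "real^'m"
  assumes "block_partition blk"
    and "\<forall>b. w b \<ge> 1"
    and "s \<ge> (winf w)\<^sup>2"
    and "0 < \<rho>" and "\<rho> < 1" and "\<tau> > 0"
    and "BRNSP blk w 2 A s \<rho> \<tau>"
    and "y = A *v x + e" and "norm e \<le> \<eta>"
    and "norm (A *v xh - y) \<le> \<eta>"
    and "\<forall>z. norm (A *v z - y) \<le> \<eta> \<longrightarrow> wnorm blk w 1 xh \<le> wnorm blk w 1 z"
  shows "wnorm blk w 1 (x - xh) \<le> 2 * ((1 + \<rho>)\<^sup>2 / (1 - \<rho>)) * best_approx blk w s 1 x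
            + 2 * ((3 + \<rho>) / (1 - \<rho>) * \<tau>) * sqrt s * \<eta>
       \<and> norm (x - xh) \<le> 2 * ((1 + \<rho>)\<^sup>2 / (1 - \<rho>)) * best_approx blk w s 1 x / sqrt s
            + 2 * ((3 + \<rho>) / (1 - \<rho>) * \<tau>) * \<eta>"
proof -
  have w_ge_1: "1 \<le> w b" and w_nonneg: "0 \<le> w b" for b
    using assms(2) order_trans zero_le_one by blast+
  have "1 \<le> s"
    using assms(7) w_ge_1 by (rule BRNSP_order_ge_1)
  have x_feasible: "norm (A *v x - y) \<le> \<eta>"
    using assms(8,9) by (simp add: norm_minus_commute)
  then have residual: "norm (A *v (x - xh)) \<le> 2 * \<eta>"
    using norm_triangle_ineq4[of "A *v x - y" "A *v xh - y"] assms(10)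
    by (simp add: matrix_vector_mult_diff_distrib)
  have "wnorm blk w 1 xh \<le> wnorm blk w 1 x"
    using assms(11) x_feasible by blast
  with assms(7) w_ge_1 have l1: "(1 - \<rho>) * wnorm blk w 1 (x - xh)
    \<le> 2 * sqrt s * \<tau> * norm (A *v (x - xh)) + 2 * (1 + \<rho>) * best_approx blk w s 1 x"
    by (rule BRNSP_2_wnorm_1_error_le)
  have l2: "sqrt s * norm (x - xh) \<le> (1 + \<rho>) * wnorm blk w 1 (x - xh) + sqrt s * \<tau> * norm (A *v (x - xh))"
    using assms(7) w_ge_1 by (rule BRNSP_2_norm_le)
  have "0 \<le> best_approx blk w s 1 x"
    using \<open>1 \<le> s\<close> w_nonneg by (simp add: best_approx_1_nonneg)
  with recovery_bounds_arith[OF _ assms(5) _ _ _ _ residual l1 l2] assms(4,6) \<open>1 \<le> s\<close>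
  show ?thesis
    by simp
qed

end
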